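(* Let $K\subset\mathbb R$ be bounded and $T:K\to K$. If there exists a $T^{\mathbb N}$ interval of positive length, then there exist a subinterval $I\subset K$ of positive length and $n\in\mathbb N$ such that $T^nx=x$ for all $x\in I$.
   Context: An interval is a bounded nonempty connected subset of $\mathbb R$. A subinterval $I\subset K$ is a $T^m$ interval if $T^mx-x$ is constant for $x\in I$ ($T^m$ the $m$-fold composition); it is a $T^{\mathbb N}$ interval if it is a $T^m$ interval for every $m\in\mathbb N$. *)

theory Defs
  imports "HOL-Analysis.Analysis"
begin

definition real_interval :: "real set \<Rightarrow> bool" where
  "real_interval I \<longleftrightarrow> bounded I \<and> I \<noteq> {} \<and> connected I"

definition interval_length :: "real set \<Rightarrow> real" where
  "interval_length I = Sup I - Inf I"

definition Tm_interval :: "(real \<Rightarrow> real) \<Rightarrow> real set \<Rightarrow> nat \<Rightarrow> real set \<Rightarrow> bool" where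
  "Tm_interval T K m I \<longleftrightarrow>
     real_interval I \<and> I \<subseteq> K \<and> (\<exists>c. \<forall>x\<in>I. (T ^^ m) x - x = c)"

definition TN_interval :: "(real \<Rightarrow> real) \<Rightarrow> real set \<Rightarrow> real set \<Rightarrow> bool" where
  "TN_interval T K I \<longleftrightarrow> (\<forall>m::nat. m \<ge> 1 \<longrightarrow> Tm_interval T K m I)"

end

theory Submission
  imports Defs
begin

text \<open>On a \<open>T\<^sup>\<nat>\<close> interval \<open>J\<close> every iterate \<open>T\<^sup>m\<close> is a translation \<open>x \<mapsto> x + c m\<close>, and the
  boundedness of \<open>K\<close> bounds the sequence \<open>c\<close>. By compactness some \<open>c i\<close> and \<open>c j\<close> with \<open>i < j\<close>
  differ by \<open>\<delta>\<close> less than the length of \<open>J\<close>, so \<open>J\<close> and \<open>J + \<delta>\<close> overlap. Following one point of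
  the overlap gives \<open>c (i + k (j - i)) = c i + k \<delta>\<close>, and boundedness forces \<open>\<delta> = 0\<close>. Hence
  \<open>T\<^sup>j = T\<^sup>i\<close> on \<open>J\<close>, i.e. \<open>T\<^sup>j\<^sup>-\<^sup>i\<close> fixes the interval \<open>T\<^sup>i(J) = J + c i \<subseteq> K\<close> pointwise.\<close>

lemma bounded_range_close_pair:
  fixes f :: "nat \<Rightarrow> 'a::heine_borel"
  assumes "bounded (range f)" and "e > 0"
  obtains i j where "i < j" and "dist (f i) (f j) < e"
proof -
  obtain l r where r: "strict_mono r" and lim: "(f \<circ> r) \<longlonglongrightarrow> l"
    using bounded_imp_convergent_subsequence[OF assms(1)] by blast
  obtain N where "\<forall>m\<ge>N. \<forall>n\<ge>N. dist ((f \<circ> r) m) ((f \<circ> r) n) < e"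
    using metric_CauchyD[OF LIMSEQ_imp_Cauchy[OF lim] assms(2)] by blast
  then have "dist (f (r N)) (f (r (Suc N))) < e" by simp
  moreover have "r N < r (Suc N)" using r by (simp add: strict_mono_def)
  ultimately show ?thesis using that by blast
qed

lemma bounded_range_arithmetic_progression:
  fixes a d :: real
  assumes "bounded (range (\<lambda>k. a + real k * d))"
  shows "d = 0"
proof (rule ccontr)
  assume "d \<noteq> 0"
  obtain B where B: "\<And>k. \<bar>a + real k * d\<bar> \<le> B"
    using assms by (auto simp: bounded_iff)
  obtain k :: nat where k: "real k > 2 * B / \<bar>d\<bar>"
    using reals_Archimedean2 by blast
  have "2 * B < real k * \<bar>d\<bar>" using k \<open>d \<noteq> 0\<close> by (simp add: pos_divide_less_eq)
  moreover have "\<bar>real k * d\<bar> \<le> 2 * B"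
    using B[of k] B[of 0] by linarith
  ultimately show False by (simp add: abs_mult)
qed

lemma real_interval_greaterThanLessThan:
  fixes a b :: real
  assumes "a < b"
  shows "real_interval {a<..<b}" and "interval_length {a<..<b} = b - a"
  using assms by (auto simp: real_interval_def interval_length_def)

lemma real_interval_contains_open_interval:
  assumes "real_interval J"
  shows "{Inf J<..<Sup J} \<subseteq> J"
proof
  fix z assume z: "z \<in> {Inf J<..<Sup J}"
  have J: "J \<noteq> {}" "bdd_below J" "bdd_above J" "connected J"
    using assms by (auto simp: real_interval_def bounded_imp_bdd_below bounded_imp_bdd_above)
  obtain x where x: "x \<in> J" "x < z"
    using z J by (meson cInf_less_iff greaterThanLessThan_iff)
  obtain y where y: "y \<in> J" "z < y"
    using z J by (meson less_cSup_iff greaterThanLessThan_iff)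
  show "z \<in> J" using connectedD_interval[OF J(4) x(1) y(1)] x(2) y(2) by simp
qed

lemma real_interval_shift_overlap:
  assumes "real_interval J" and "\<bar>d\<bar> < interval_length J"
  obtains y where "y \<in> J" and "y + d \<in> J"
proof -
  define y where "y = (Inf J + Sup J - d) / 2"
  have "y \<in> {Inf J<..<Sup J}" "y + d \<in> {Inf J<..<Sup J}"
    using assms(2) by (auto simp: y_def interval_length_def field_simps)
  then show ?thesis
    using that real_interval_contains_open_interval[OF assms(1)] by blast
qed

lemma funpow_image_subset:
  assumes "f ` K \<subseteq> K"
  shows "(f ^^ m) ` K \<subseteq> K"
  using assms by (induction m) auto

lemma funpow_diff_apply:
  assumes "i \<le> j"
  shows "(f ^^ (j - i)) ((f ^^ i) x) = (f ^^ j) x"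
  using assms by (metis funpow_add comp_apply le_add_diff_inverse2)

lemma TN_interval_translation:
  assumes "TN_interval T K J" and "bounded K" and "T ` K \<subseteq> K"
  obtains c where "\<And>m y. y \<in> J \<Longrightarrow> (T ^^ m) y = y + c m" and "bounded (range c)"
proof -
  have J: "real_interval J" "J \<subseteq> K"
    using assms(1) by (auto simp: TN_interval_def Tm_interval_def)
  then obtain x0 where "x0 \<in> J" by (auto simp: real_interval_def)
  define c where "c m = (T ^^ m) x0 - x0" for m
  have "(T ^^ m) y = y + c m" if "y \<in> J" for m y
  proof (cases "m = 0")
    case False
    then obtain e where "\<forall>x\<in>J. (T ^^ m) x - x = e"
      using assms(1) unfolding TN_interval_def Tm_interval_def by (meson less_one not_le)
    then show ?thesis using \<open>x0 \<in> J\<close> that by (force simp: c_def)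
  qed (simp add: c_def)
  moreover have "(T ^^ m) x0 \<in> K" for m
    using funpow_image_subset[OF assms(3)] \<open>x0 \<in> J\<close> J(2) by blast
  then have "range c \<subseteq> (\<lambda>x. x - x0) ` K" unfolding c_def by blast
  then have "bounded (range c)"
    using bounded_subset bounded_translation_minus[OF assms(2)] by blast
  ultimately show ?thesis using that by blast
qed

text \<open>Since \<open>T\<^sup>j y = T\<^sup>i (y + \<delta>)\<close> for one point \<open>y\<close>, the iterate \<open>T\<^sup>j\<^sup>-\<^sup>i\<close> adds \<open>\<delta>\<close> at every
  step of the orbit of \<open>T\<^sup>i y\<close>.\<close>

lemma translation_iterates_no_drift:
  fixes T :: "real \<Rightarrow> real"
  assumes translate: "\<And>m y. y \<in> J \<Longrightarrow> (T ^^ m) y = y + c m"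
    and bounded: "bounded (range c)"
    and "i \<le> j" and "y \<in> J" and "y + (c j - c i) \<in> J"
  shows "c j = c i"
proof -
  define n where "n = j - i"
  define d where "d = c j - c i"
  have "(T ^^ n) ((T ^^ i) y) = (T ^^ j) y"
    using funpow_diff_apply \<open>i \<le> j\<close> by (simp add: n_def)
  also have "\<dots> = (T ^^ i) (y + d)"
    using translate[OF \<open>y \<in> J\<close>, of j] translate[OF \<open>y + (c j - c i) \<in> J\<close>, of i]
    by (simp add: d_def)
  finally have jump: "(T ^^ n) ((T ^^ i) y) = (T ^^ i) (y + d)" .
  have step: "c (i + Suc k * n) = c (i + k * n) + d" for k
  proof -
    have split: "i + Suc k * n = k * n + (n + i)" by simp
    have "(T ^^ (i + Suc k * n)) y = (T ^^ (k * n)) ((T ^^ n) ((T ^^ i) y))"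
      by (simp only: split funpow_add o_apply)
    also have "\<dots> = (T ^^ (i + k * n)) (y + d)"
      by (simp only: jump add.commute[of i] funpow_add o_apply)
    finally have "(T ^^ (i + Suc k * n)) y = (T ^^ (i + k * n)) (y + d)" .
    then show ?thesis
      using translate[OF \<open>y \<in> J\<close>] translate[OF \<open>y + (c j - c i) \<in> J\<close>] by (simp add: d_def)
  qed
  have progression: "c (i + k * n) = c i + real k * d" for k
  proof (induction k)
    case (Suc k)
    have "real (Suc k) * d = real k * d + d" by (simp add: algebra_simps)
    with step[of k] Suc.IH show ?case by linarith
  qed simp
  then have "range (\<lambda>k. c i + real k * d) \<subseteq> range c"
    by (metis (no_types, lifting) image_subset_iff rangeI)
  then have "d = 0"
    using bounded bounded_range_arithmetic_progression bounded_subset by blast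
  then show ?thesis by (simp add: d_def)
qed

lemma translation_iterates_fixed_point:
  fixes T :: "'a::ab_group_add \<Rightarrow> 'a"
  assumes translate: "\<And>m y. y \<in> J \<Longrightarrow> (T ^^ m) y = y + c m"
    and "i \<le> j" and "c j = c i" and "z - c i \<in> J"
  shows "(T ^^ (j - i)) z = z"
proof -
  have "(T ^^ i) (z - c i) = z"
    using translate[OF assms(4), of i] by simp
  then have "(T ^^ (j - i)) z = (T ^^ j) (z - c i)"
    using funpow_diff_apply[OF \<open>i \<le> j\<close>] by metis
  also have "\<dots> = z"
    using translate[OF assms(4), of j] \<open>c j = c i\<close> by simp
  finally show ?thesis .
qed

theorem theorem2p5:
  fixes K :: "real set" and T :: "real \<Rightarrow> real"
  assumes "bounded K"
    and "T ` K \<subseteq> K"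
    and "\<exists>J. TN_interval T K J \<and> interval_length J > 0"
  shows "\<exists>I n. real_interval I \<and> I \<subseteq> K \<and> interval_length I > 0 \<and> n \<ge> 1 \<and>
               (\<forall>x\<in>I. (T ^^ n) x = x)"
proof -
  obtain J where TN: "TN_interval T K J" and len: "interval_length J > 0"
    using assms(3) by blast
  then have J: "real_interval J" "J \<subseteq> K"
    by (auto simp: TN_interval_def Tm_interval_def)
  obtain c where translate: "\<And>m y. y \<in> J \<Longrightarrow> (T ^^ m) y = y + c m"
    and bounded_c: "bounded (range c)"
    using TN_interval_translation[OF TN assms(1,2)] by blast
  obtain i j where "i < j" and close: "dist (c i) (c j) < interval_length J"
    using bounded_range_close_pair[OF bounded_c len] by blast
  obtain y where "y \<in> J" "y + (c j - c i) \<in> J"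
    using real_interval_shift_overlap[OF J(1)] close by (metis dist_real_def dist_commute)
  then have "c j = c i"
    using translation_iterates_no_drift[OF translate bounded_c] \<open>i < j\<close> by simp
  define I where "I = {Inf J + c i<..<Sup J + c i}"
  have I: "real_interval I" "interval_length I > 0"
    using real_interval_greaterThanLessThan[of "Inf J + c i" "Sup J + c i"] len
    by (simp_all add: I_def interval_length_def)
  have preimage: "z - c i \<in> J" if "z \<in> I" for z
    using that real_interval_contains_open_interval[OF J(1)] by (auto simp: I_def)
  have "I \<subseteq> (T ^^ i) ` J"
    using translate[OF preimage] by (metis diff_add_cancel image_eqI preimage subsetI)
  then have "I \<subseteq> K"
    using funpow_image_subset[OF assms(2), of i] J(2) by blast
  moreover have "\<forall>z\<in>I. (T ^^ (j - i)) z = z"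
    using translation_iterates_fixed_point[OF translate] \<open>i < j\<close> \<open>c j = c i\<close> preimage by simp
  moreover have "j - i \<ge> 1" using \<open>i < j\<close> by simp
  ultimately show ?thesis using I by blast
qed

end
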